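(* For every $s\ge1$ and every $\mathbf{k}=(k_1,\dots,k_s)\in\mathbb{Z}_{\ge1}^s$, $$F_{\mathbf{k}}(t)=\sum_{\mathbf{w}\in W_{s-1}} F_{r_{\mathbf{w}}(\mathbf{k})*\tilde{\mathbf{w}}}(t)\cdot t^{|\mathbf{w}|}.$$
   Context: Ladder diagrams: $Q^+$ is the directed graph on $\mathbb{Z}_{\ge0}^2$ with edges $((i,j),(i,j+1))$ and $((i,j),(i+1,j))$. For a sequence $\mathbf{k}=(k_1,\dots,k_s)$ of positive integers with sum $n$, let $n_0=0$, $n_i=\sum_{j\le i}k_j$, $T_{\mathbf{k}}=\{(n_\ell,n-n_\ell):0\le\ell\le s\}$ (terminal vertices), and $\Gamma_{\mathbf{k}}$ the induced subgraph of $Q^+$ on $\{(a,b):a\le c,b\le d\text{ for some }(c,d)\in T_{\mathbf{k}}\}$. For a sequence of nonnegative integers, $\Gamma_{\mathbf{k}}$ is defined as $\Gamma$ of the subsequence of its positive entries (for the all-zero/empty sequence this is the single vertex $(0,0)$, which is also the unique terminal vertex). A positive path is a shortest directed path from $(0,0)$ to a terminal vertex; a face of $\Gamma_{\mathbf{k}}$ is a subgraph containing all terminal vertices which is a union of positive paths; its dimension is $\operatorname{rank}H_1$ of it as a 1-dimensional CW complex. The $f$-polynomial is $F_{\mathbf{k}}(t)=\sum_{\gamma}t^{\dim\gamma}$, summed over all faces $\gamma$ of $\Gamma_{\mathbf{k}}$. $W_{s-1}$ is the set of sequences $\mathbf{w}=((\alpha_1,\beta_1),\dots,(\alpha_{s-1},\beta_{s-1}))$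 with each $(\alpha_i,\beta_i)\in\{(1,0),(0,1),(1,1)\}$. Set $\alpha_s=\beta_0=1$. Define $r_{\mathbf{w}}(\mathbf{k})=(k''_1,\dots,k''_s)$ with $k''_i=k_i+1-\alpha_i-\beta_{i-1}$, $\tilde{\mathbf{w}}=(\alpha_1\beta_1,\dots,\alpha_{s-1}\beta_{s-1})$, and $|\mathbf{w}|=\sum_{i=1}^{s-1}\alpha_i\beta_i$. For $\mathbf{a}=(a_1,\dots,a_s)$ and $\mathbf{b}=(b_1,\dots,b_{s-1})$, $\mathbf{a}*\mathbf{b}=(a_1,b_1,a_2,b_2,\dots,a_{s-1},b_{s-1},a_s)$. *)

theory Defs
  imports "HOL-Computational_Algebra.Polynomial"
begin

type_synonym vert = "nat \<times> nat"

definition terminals_pos :: "nat list \<Rightarrow> vert set" where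
  "terminals_pos ks = {(sum_list (take l ks), sum_list ks - sum_list (take l ks)) | l. l \<le> length ks}"

definition terminals :: "nat list \<Rightarrow> vert set" where
  "terminals ks = terminals_pos (filter (\<lambda>x. 0 < x) ks)"

definition gverts :: "nat list \<Rightarrow> vert set" where
  "gverts ks = {(a, b). \<exists>(c, d) \<in> terminals ks. a \<le> c \<and> b \<le> d}"

definition qedge :: "vert \<Rightarrow> vert \<Rightarrow> bool" where
  "qedge u v \<longleftrightarrow> v = (fst u, Suc (snd u)) \<or> v = (Suc (fst u), snd u)"

definition gedges :: "nat list \<Rightarrow> (vert \<times> vert) set" where
  "gedges ks = {(u, v). u \<in> gverts ks \<and> v \<in> gverts ks \<and> qedge u v}"

definition path_edges :: "vert list \<Rightarrow> (vert \<times> vert) set" where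
  "path_edges p = set (zip p (tl p))"

(* directed path in Gamma_k from (0,0) to a terminal vertex; every directed path
   in Q^+ between two vertices is shortest, so these are exactly the positive paths *)
definition positive_path :: "nat list \<Rightarrow> vert list \<Rightarrow> bool" where
  "positive_path ks p \<longleftrightarrow> p \<noteq> [] \<and> hd p = (0, 0) \<and> last p \<in> terminals ks
     \<and> path_edges p \<subseteq> gedges ks"

definition faces :: "nat list \<Rightarrow> (vert set \<times> (vert \<times> vert) set) set" where
  "faces ks = {(V, E). \<exists>P. (\<forall>p\<in>P. positive_path ks p) \<and>
      V = (\<Union>p\<in>P. set p) \<and> E = (\<Union>p\<in>P. path_edges p) \<and> terminals ks \<subseteq> V}"

(* rank of H_1 of a finite graph as a 1-dim CW complex: |E| - |V| + #components *)
definition conn_rel :: "vert set \<Rightarrow> (vert \<times> vert) set \<Rightarrow> (vert \<times> vert) set" where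
  "conn_rel V E = (E \<union> E\<inverse>)\<^sup>* \<inter> (V \<times> V)"

definition h1_rank :: "vert set \<times> (vert \<times> vert) set \<Rightarrow> nat" where
  "h1_rank G = (case G of (V, E) \<Rightarrow>
      nat (int (card E) - int (card V) + int (card (V // conn_rel V E))))"

definition fpoly :: "nat list \<Rightarrow> int poly" where
  "fpoly ks = (\<Sum>\<gamma>\<in>faces ks. monom 1 (h1_rank \<gamma>))"

definition Wset :: "nat \<Rightarrow> (nat \<times> nat) list set" where
  "Wset m = {w. length w = m \<and> set w \<subseteq> {(1,0),(0,1),(1,1)}}"

(* alpha_i, beta_i with 1-based indices, alpha_s = 1, beta_0 = 1 *)
definition walpha :: "(nat \<times> nat) list \<Rightarrow> nat \<Rightarrow> nat" where
  "walpha w i = (if 1 \<le> i \<and> i \<le> length w then fst (w ! (i - 1)) else 1)"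

definition wbeta :: "(nat \<times> nat) list \<Rightarrow> nat \<Rightarrow> nat" where
  "wbeta w i = (if 1 \<le> i \<and> i \<le> length w then snd (w ! (i - 1)) else 1)"

definition rw :: "(nat \<times> nat) list \<Rightarrow> nat list \<Rightarrow> nat list" where
  "rw w ks = map (\<lambda>i. ks ! (i - 1) + 1 - walpha w i - wbeta w (i - 1)) [1..<Suc (length ks)]"

definition wtilde :: "(nat \<times> nat) list \<Rightarrow> nat list" where
  "wtilde w = map (\<lambda>(a, b). a * b) w"

definition wsize :: "(nat \<times> nat) list \<Rightarrow> nat" where
  "wsize w = sum_list (wtilde w)"

(* a * b = (a_1, b_1, ..., a_{s-1}, b_{s-1}, a_s) *)
fun interleave :: "nat list \<Rightarrow> nat list \<Rightarrow> nat list" where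
  "interleave (a # as) (b # bs) = a # b # interleave as bs"
| "interleave as [] = as"
| "interleave [] bs = []"

end

(* All terminal vertices (n_l, n - n_l), l = 0..s, lie on the antidiagonal a + b = n.
   Deleting them from a face leaves a face for the new terminal set fst ` X, where X is the
   set of edges of the face entering the old terminals; conversely a face is recovered from
   any such smaller face and any set X of in-edges covering every terminal.  Faces are
   connected and every vertex but the origin is the head of an edge, so their dimension is
   |E| + 1 - |V| and drops by |X| - (s + 1) under the deletion.  Terminal l has an
   in-neighbour on the left iff l >= 1 and one below iff l < s; recording which of them X
   uses gives a bijection with W_{s-1}, under which |X| = s + 1 + |w| and fst ` X is the
   terminal set of r_w(k) * w~. *)

theory Submission
  imports Defs
begin

section \<open>Lattice paths from the origin\<close>

definition level :: "vert \<Rightarrow> nat" where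
  "level v = fst v + snd v"

definition lattice_path :: "vert list \<Rightarrow> bool" where
  "lattice_path p \<longleftrightarrow> p \<noteq> [] \<and> hd p = (0, 0) \<and> (\<forall>(u, v) \<in> path_edges p. qedge u v)"

lemma path_edges_singleton [simp]: "path_edges [v] = {}"
  by (simp add: path_edges_def)

lemma path_edges_snoc:
  "p \<noteq> [] \<Longrightarrow> path_edges (p @ [t]) = insert (last p, t) (path_edges p)"
proof (induction p rule: induct_list012)
  case (3 x y zs)
  then show ?case by (simp add: path_edges_def insert_commute)
qed (simp_all add: path_edges_def)

lemma path_edges_memD: "(u, v) \<in> path_edges p \<Longrightarrow> u \<in> set p \<and> v \<in> set p"
  unfolding path_edges_def by (cases p) (auto dest: set_zip_leftD set_zip_rightD)

lemma qedge_level: "qedge u v \<Longrightarrow> level v = Suc (level u)"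
  unfolding qedge_def level_def by auto

lemma lattice_path_singleton [simp]: "lattice_path [v] \<longleftrightarrow> v = (0, 0)"
  by (simp add: lattice_path_def)

lemma lattice_path_snoc:
  "p \<noteq> [] \<Longrightarrow> lattice_path (p @ [t]) \<longleftrightarrow> lattice_path p \<and> qedge (last p) t"
  by (auto simp: lattice_path_def path_edges_snoc)

lemma lattice_path_induct [consumes 1, case_names origin step]:
  assumes "lattice_path p"
    and "P [(0, 0)]"
    and "\<And>p t. lattice_path p \<Longrightarrow> qedge (last p) t \<Longrightarrow> P p \<Longrightarrow> P (p @ [t])"
  shows "P p"
  using assms(1)
proof (induction p rule: rev_induct)
  case Nil
  then show ?case by (simp add: lattice_path_def)
next
  case (snoc t p)
  show ?case
  proof (cases "p = []")
    case True
    then show ?thesis using snoc.prems assms(2) by simp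
  next
    case False
    then show ?thesis using snoc assms(3) lattice_path_snoc by blast
  qed
qed

lemma lattice_path_le_last:
  "lattice_path p \<Longrightarrow> v \<in> set p \<Longrightarrow> fst v \<le> fst (last p) \<and> snd v \<le> snd (last p)"
proof (induction p arbitrary: v rule: lattice_path_induct)
  case (step p t)
  have "p \<noteq> []" using step.hyps(1) by (simp add: lattice_path_def)
  moreover have "fst (last p) \<le> fst t \<and> snd (last p) \<le> snd t"
    using step.hyps(2) by (auto simp: qedge_def)
  ultimately show ?case using step.IH[of v] step.prems by auto
qed simp

lemma lattice_path_level_le_last:
  assumes "lattice_path p" "v \<in> set p"
  shows "level v \<le> level (last p)" "level v = level (last p) \<Longrightarrow> v = last p"
  using lattice_path_le_last[OF assms] by (auto simp: level_def prod_eq_iff)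

lemma lattice_path_reaches:
  "lattice_path p \<Longrightarrow> v \<in> set p \<Longrightarrow> ((0, 0), v) \<in> (path_edges p)\<^sup>*"
proof (induction p arbitrary: v rule: lattice_path_induct)
  case (step p t)
  have p: "p \<noteq> []" using step.hyps(1) by (simp add: lattice_path_def)
  have mono: "(path_edges p)\<^sup>* \<subseteq> (path_edges (p @ [t]))\<^sup>*"
    by (rule rtrancl_mono) (auto simp: path_edges_snoc[OF p])
  show ?case
  proof (cases "v = t")
    case True
    have "((0, 0), last p) \<in> (path_edges p)\<^sup>*" using step.IH p by simp
    then show ?thesis
      using mono True by (auto simp: path_edges_snoc[OF p] intro: rtrancl_into_rtrancl)
  next
    case False
    then show ?thesis using step.IH[of v] step.prems mono by auto
  qed
qed simp

lemma lattice_path_in_edge: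
  "lattice_path p \<Longrightarrow> v \<in> set p \<Longrightarrow> v \<noteq> (0, 0) \<Longrightarrow> v \<in> snd ` path_edges p"
proof (induction p arbitrary: v rule: lattice_path_induct)
  case (step p t)
  have p: "p \<noteq> []" using step.hyps(1) by (simp add: lattice_path_def)
  show ?case
  proof (cases "v = t")
    case True
    then show ?thesis by (force simp: path_edges_snoc[OF p])
  next
    case False
    then show ?thesis using step.IH[of v] step.prems by (auto simp: path_edges_snoc[OF p])
  qed
qed simp

lemma lattice_path_last_step:
  assumes "lattice_path p" "level (last p) = Suc m"
  shows "p = butlast p @ [last p]" "lattice_path (butlast p)"
    "qedge (last (butlast p)) (last p)" "v \<in> set (butlast p) \<Longrightarrow> level v \<le> m"
proof -
  have "p \<noteq> []" using assms(1) by (simp add: lattice_path_def)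
  then show p: "p = butlast p @ [last p]" by simp
  have "butlast p \<noteq> []"
  proof
    assume "butlast p = []"
    then have "last p = (0, 0)" using assms(1) p lattice_path_singleton by (metis append_Nil)
    then show False using assms(2) by (simp add: level_def)
  qed
  then show "lattice_path (butlast p)" "qedge (last (butlast p)) (last p)"
    using assms(1) lattice_path_snoc p by metis+
  then show "v \<in> set (butlast p) \<Longrightarrow> level v \<le> m"
    using lattice_path_level_le_last(1)[of "butlast p" v] qedge_level[of "last (butlast p)" "last p"]
      assms(2) by simp
qed

section \<open>Faces for an arbitrary set of terminal vertices\<close>

definition faces_of :: "vert set \<Rightarrow> (vert set \<times> (vert \<times> vert) set) set" where
  "faces_of T = {(V, E). \<exists>P. (\<forall>p\<in>P. lattice_path p \<and> last p \<in> T) \<and> V = (\<Union>p\<in>P. set p)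
      \<and> E = (\<Union>p\<in>P. path_edges p) \<and> T \<subseteq> V}"

definition fpoly_of :: "vert set \<Rightarrow> int poly" where
  "fpoly_of T = (\<Sum>\<gamma>\<in>faces_of T. monom 1 (h1_rank \<gamma>))"

lemma faces_ofE:
  assumes "(V, E) \<in> faces_of T"
  obtains P where "\<And>p. p \<in> P \<Longrightarrow> lattice_path p" "\<And>p. p \<in> P \<Longrightarrow> last p \<in> T"
    "V = (\<Union>p\<in>P. set p)" "E = (\<Union>p\<in>P. path_edges p)" "T \<subseteq> V"
proof -
  from assms obtain P where "\<forall>p\<in>P. lattice_path p \<and> last p \<in> T" "V = (\<Union>p\<in>P. set p)"
    "E = (\<Union>p\<in>P. path_edges p)" "T \<subseteq> V"
    unfolding faces_of_def by blast
  then show thesis using that by blast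
qed

lemma faces_ofI:
  assumes "\<And>p. p \<in> P \<Longrightarrow> lattice_path p" "\<And>p. p \<in> P \<Longrightarrow> last p \<in> T" "T \<subseteq> (\<Union>p\<in>P. set p)"
  shows "((\<Union>p\<in>P. set p), (\<Union>p\<in>P. path_edges p)) \<in> faces_of T"
  using assms unfolding faces_of_def by blast

lemma positive_path_iff: "positive_path ks p \<longleftrightarrow> lattice_path p \<and> last p \<in> terminals ks"
proof
  assume "positive_path ks p"
  then show "lattice_path p \<and> last p \<in> terminals ks"
    unfolding positive_path_def lattice_path_def gedges_def by auto
next
  assume p: "lattice_path p \<and> last p \<in> terminals ks"
  have "v \<in> gverts ks" if "v \<in> set p" for v
    using lattice_path_le_last[OF _ that] p unfolding gverts_def by (cases v; cases "last p") auto
  then have "path_edges p \<subseteq> gedges ks"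
    using p path_edges_memD unfolding lattice_path_def gedges_def by fast
  then show "positive_path ks p"
    using p unfolding positive_path_def lattice_path_def by auto
qed

lemma fpoly_eq_fpoly_of: "fpoly ks = fpoly_of (terminals ks)"
proof -
  have "faces ks = faces_of (terminals ks)"
    unfolding faces_def faces_of_def positive_path_iff by simp
  then show ?thesis unfolding fpoly_def fpoly_of_def by simp
qed

definition on_level :: "nat \<Rightarrow> vert set \<Rightarrow> bool" where
  "on_level m T \<longleftrightarrow> (\<forall>t\<in>T. level t = m)"

lemma finite_level_le: "finite {v. level v \<le> m}"
proof -
  have "{v. level v \<le> m} \<subseteq> {..m} \<times> {..m}" by (auto simp: level_def)
  then show ?thesis by (rule finite_subset) simp
qed

lemma face_level_le:
  assumes "(V, E) \<in> faces_of T" "on_level m T" "v \<in> V"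
  shows "level v \<le> m"
proof -
  obtain P where P: "\<And>p. p \<in> P \<Longrightarrow> lattice_path p" "\<And>p. p \<in> P \<Longrightarrow> last p \<in> T"
    "V = (\<Union>p\<in>P. set p)"
    using assms(1) by (elim faces_ofE) blast
  then obtain p where p: "p \<in> P" "v \<in> set p" using assms(3) by blast
  then show ?thesis
    using lattice_path_level_le_last(1)[OF P(1)[OF p(1)] p(2)] P(2)[OF p(1)] assms(2)
    unfolding on_level_def by simp
qed

lemma face_edges:
  assumes "(V, E) \<in> faces_of T" "(u, v) \<in> E"
  shows "qedge u v" "u \<in> V" "v \<in> V"
proof -
  obtain P where P: "\<And>p. p \<in> P \<Longrightarrow> lattice_path p"
    "V = (\<Union>p\<in>P. set p)" "E = (\<Union>p\<in>P. path_edges p)"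
    using assms(1) by (elim faces_ofE) blast
  then obtain p where "p \<in> P" "(u, v) \<in> path_edges p" using assms(2) by blast
  then show "qedge u v" "u \<in> V" "v \<in> V"
    using P path_edges_memD unfolding lattice_path_def by fast+
qed

lemma finite_faces_of:
  assumes "on_level m T"
  shows "finite (faces_of T)"
proof (rule finite_subset)
  let ?B = "{v. level v \<le> m}"
  show "faces_of T \<subseteq> Pow ?B \<times> Pow (?B \<times> ?B)"
  proof
    fix g assume "g \<in> faces_of T"
    then obtain V E where g: "g = (V, E)" and face: "(V, E) \<in> faces_of T" by (cases g) auto
    have "V \<subseteq> ?B" using face_level_le[OF face assms] by blast
    moreover have "E \<subseteq> ?B \<times> ?B" using face_level_le[OF face assms] face_edges[OF face] by auto
    ultimately show "g \<in> Pow ?B \<times> Pow (?B \<times> ?B)" using g by simp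
  qed
  show "finite (Pow ?B \<times> Pow (?B \<times> ?B))" using finite_level_le by simp
qed

lemma finite_face:
  assumes "(V, E) \<in> faces_of T" "on_level m T"
  shows "finite V" "finite E"
proof -
  have "V \<subseteq> {v. level v \<le> m}" using face_level_le[OF assms] by blast
  then show "finite V" using finite_level_le by (rule finite_subset)
  moreover have "E \<subseteq> V \<times> V" using face_edges[OF assms(1)] by auto
  ultimately show "finite E" by (simp add: finite_subset)
qed

lemma conn_rel_rooted:
  assumes "r \<in> V" "\<And>v. v \<in> V \<Longrightarrow> (r, v) \<in> E\<^sup>*"
  shows "V // conn_rel V E = {V}"
proof -
  let ?R = "(E \<union> E\<inverse>)\<^sup>*"
  have sym: "sym ?R" by (intro sym_rtrancl sym_Un_converse)
  have "E\<^sup>* \<subseteq> ?R" by (rule rtrancl_mono) blast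
  have "(u, v) \<in> ?R" if "u \<in> V" "v \<in> V" for u v
  proof -
    have "(r, u) \<in> ?R" "(r, v) \<in> ?R" using assms(2) that \<open>E\<^sup>* \<subseteq> ?R\<close> by blast+
    then have "(u, r) \<in> ?R" "(r, v) \<in> ?R" using symD[OF sym] by blast+
    then show ?thesis by (rule rtrancl_trans)
  qed
  then have "conn_rel V E = V \<times> V" unfolding conn_rel_def by blast
  moreover have "(V \<times> V) `` {v} = V" if "v \<in> V" for v using that by blast
  ultimately show ?thesis using assms(1) unfolding quotient_def by auto
qed

lemma h1_rank_rooted:
  assumes "finite E" "r \<in> V" "\<And>v. v \<in> V \<Longrightarrow> (r, v) \<in> E\<^sup>*" "V - {r} \<subseteq> snd ` E"
  shows "card V \<le> card E + 1" "h1_rank (V, E) = card E + 1 - card V"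
proof -
  have "finite (V - {r})" using assms(1,4) by (meson finite_surj)
  have "card (V - {r}) \<le> card E"
    using assms(1,4) by (meson card_image_le card_mono finite_imageI order_trans)
  then show "card V \<le> card E + 1"
    using assms(2) \<open>finite (V - {r})\<close> by (simp add: card_Diff_singleton_if)
  then show "h1_rank (V, E) = card E + 1 - card V"
    unfolding h1_rank_def using conn_rel_rooted[of r V E] assms(2,3) by simp
qed

lemma h1_rank_face:
  assumes face: "(V, E) \<in> faces_of T" and lev: "on_level m T" and "T \<noteq> {}"
  shows "card V \<le> card E + 1" "h1_rank (V, E) = card E + 1 - card V"
proof -
  obtain P where P: "\<And>p. p \<in> P \<Longrightarrow> lattice_path p"
    "V = (\<Union>p\<in>P. set p)" "E = (\<Union>p\<in>P. path_edges p)" "T \<subseteq> V"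
    using face by (elim faces_ofE) blast
  obtain p where p: "p \<in> P" using \<open>T \<noteq> {}\<close> P(2,4) by blast
  then have root: "(0, 0) \<in> V"
    using P(1,2) hd_in_set unfolding lattice_path_def by fastforce
  have reach: "((0, 0), v) \<in> E\<^sup>*" if v: "v \<in> V" for v
  proof -
    obtain p where "p \<in> P" "v \<in> set p" using v P(2) by blast
    then have "((0, 0), v) \<in> (path_edges p)\<^sup>*" using P(1) lattice_path_reaches by blast
    moreover have "path_edges p \<subseteq> E" using P(3) \<open>p \<in> P\<close> by blast
    ultimately show ?thesis using rtrancl_mono by blast
  qed
  have heads: "V - {(0, 0)} \<subseteq> snd ` E"
  proof
    fix v assume v: "v \<in> V - {(0, 0)}"
    then obtain p where "p \<in> P" "v \<in> set p" using P(2) by blast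
    then have "v \<in> snd ` path_edges p" using v P(1) lattice_path_in_edge by blast
    then show "v \<in> snd ` E" using P(3) \<open>p \<in> P\<close> by blast
  qed
  show "card V \<le> card E + 1" "h1_rank (V, E) = card E + 1 - card V"
    using h1_rank_rooted[OF finite_face(2)[OF face lev] root reach heads] by auto
qed

section \<open>Cutting a face along its last antidiagonal\<close>

definition in_edges :: "vert set \<Rightarrow> (vert \<times> vert) set" where
  "in_edges T = {(u, v). qedge u v \<and> v \<in> T}"

definition in_edge_covers :: "vert set \<Rightarrow> (vert \<times> vert) set set" where
  "in_edge_covers T = {X. X \<subseteq> in_edges T \<and> T \<subseteq> snd ` X}"

lemma on_level_sources:
  "on_level (Suc m) T \<Longrightarrow> X \<subseteq> in_edges T \<Longrightarrow> on_level m (fst ` X)"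
  unfolding on_level_def in_edges_def using qedge_level by fastforce

lemma finite_in_edge_covers:
  assumes "on_level (Suc m) T"
  shows "finite (in_edge_covers T)"
proof -
  let ?B = "{v. level v \<le> Suc m}"
  have "in_edges T \<subseteq> ?B \<times> ?B"
    using assms qedge_level unfolding in_edges_def on_level_def by fastforce
  then have "finite (in_edges T)" using finite_level_le finite_subset by blast
  moreover have "in_edge_covers T \<subseteq> Pow (in_edges T)" unfolding in_edge_covers_def by blast
  ultimately show ?thesis by (simp add: finite_subset)
qed

lemma lattice_path_cut_last:
  assumes p: "lattice_path p" and lev: "on_level (Suc m) T" and "last p \<in> T"
  shows "lattice_path (butlast p)" "last (butlast p) \<in> set (butlast p)"
    "set p - T = set (butlast p)" "path_edges p - in_edges T = path_edges (butlast p)"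
    "path_edges p \<inter> in_edges T = {(last (butlast p), last p)}"
proof -
  have "level (last p) = Suc m" using lev \<open>last p \<in> T\<close> unfolding on_level_def by blast
  note step = lattice_path_last_step[OF p this]
  show "lattice_path (butlast p)" by (rule step(2))
  then show "last (butlast p) \<in> set (butlast p)" unfolding lattice_path_def by simp
  have low: "v \<notin> T" if "v \<in> set (butlast p)" for v
    using step(4)[OF that] lev unfolding on_level_def by fastforce
  have low_edges: "e \<notin> in_edges T" if "e \<in> path_edges (butlast p)" for e
    using low path_edges_memD that unfolding in_edges_def by (cases e) blast
  have last_in: "(last (butlast p), last p) \<in> in_edges T"
    using step(3) \<open>last p \<in> T\<close> unfolding in_edges_def by simp
  have "set p = insert (last p) (set (butlast p))"
    using step(1) by (metis Un_insert_right append_Nil2 list.set(2) set_append)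
  then show "set p - T = set (butlast p)" using low \<open>last p \<in> T\<close> by auto
  have "path_edges p = insert (last (butlast p), last p) (path_edges (butlast p))"
    using step(1,2) path_edges_snoc unfolding lattice_path_def by metis
  then show "path_edges p - in_edges T = path_edges (butlast p)"
    "path_edges p \<inter> in_edges T = {(last (butlast p), last p)}"
    using low_edges last_in by auto
qed

lemma face_restrict:
  assumes lev: "on_level (Suc m) T" and face: "(V, E) \<in> faces_of T"
  shows "E \<inter> in_edges T \<in> in_edge_covers T"
    "(V - T, E - in_edges T) \<in> faces_of (fst ` (E \<inter> in_edges T))"
proof -
  obtain P where P: "\<And>p. p \<in> P \<Longrightarrow> lattice_path p" "\<And>p. p \<in> P \<Longrightarrow> last p \<in> T"
    "V = (\<Union>p\<in>P. set p)" "E = (\<Union>p\<in>P. path_edges p)" "T \<subseteq> V"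
    using face by (elim faces_ofE) blast
  note cut = lattice_path_cut_last[OF P(1) lev P(2)]
  have V: "V - T = (\<Union>p\<in>P. set (butlast p))"
    unfolding P(3) UN_extend_simps(6) using cut(3) by simp
  have E: "E - in_edges T = (\<Union>p\<in>P. path_edges (butlast p))"
    unfolding P(4) UN_extend_simps(6) using cut(4) by simp
  have X: "E \<inter> in_edges T = (\<lambda>p. (last (butlast p), last p)) ` P"
    unfolding P(4) UN_extend_simps(4) using cut(5) by auto
  have "T \<subseteq> snd ` (E \<inter> in_edges T)"
  proof
    fix t assume "t \<in> T"
    then obtain p where p: "p \<in> P" "t \<in> set p" using P(3,5) by blast
    have "level t = level (last p)" using lev \<open>t \<in> T\<close> P(2)[OF p(1)] unfolding on_level_def by simp
    then have "t = last p" using lattice_path_level_le_last(2)[OF P(1)[OF p(1)] p(2)] by blast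
    then show "t \<in> snd ` (E \<inter> in_edges T)" using X p(1) by force
  qed
  then show "E \<inter> in_edges T \<in> in_edge_covers T" unfolding in_edge_covers_def by blast
  have "((\<Union>q\<in>butlast ` P. set q), (\<Union>q\<in>butlast ` P. path_edges q))
      \<in> faces_of (fst ` (E \<inter> in_edges T))"
  proof (rule faces_ofI)
    show "\<And>q. q \<in> butlast ` P \<Longrightarrow> lattice_path q" using cut(1) by blast
    show "\<And>q. q \<in> butlast ` P \<Longrightarrow> last q \<in> fst ` (E \<inter> in_edges T)" unfolding X by force
    show "fst ` (E \<inter> in_edges T) \<subseteq> (\<Union>q\<in>butlast ` P. set q)" unfolding X using cut(2) by force
  qed
  then show "(V - T, E - in_edges T) \<in> faces_of (fst ` (E \<inter> in_edges T))"
    unfolding V E by simp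
qed

lemma UN_snoc_paths_subset:
  assumes ne: "\<And>p. p \<in> P \<Longrightarrow> p \<noteq> []"
    and Q: "Q = {p @ [t] | p t. p \<in> P \<and> (last p, t) \<in> X}"
  shows "(\<Union>q\<in>Q. set q) \<subseteq> (\<Union>p\<in>P. set p) \<union> snd ` X"
    "(\<Union>q\<in>Q. path_edges q) \<subseteq> (\<Union>p\<in>P. path_edges p) \<union> X"
proof (safe intro!: UN_least)
  fix q assume "q \<in> Q"
  then obtain p t where pt: "q = p @ [t]" "p \<in> P" "(last p, t) \<in> X" unfolding Q by blast
  have "t \<in> snd ` X" using pt(3) by force
  then show "\<And>v. v \<in> set q \<Longrightarrow> v \<notin> snd ` X \<Longrightarrow> v \<in> (\<Union>p\<in>P. set p)"
    using pt(1,2) by auto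
  show "\<And>e. e \<in> path_edges q \<Longrightarrow> e \<notin> X \<Longrightarrow> e \<in> (\<Union>p\<in>P. path_edges p)"
    using pt path_edges_snoc[OF ne[OF pt(2)]] by auto
qed

lemma UN_snoc_paths:
  assumes ne: "\<And>p. p \<in> P \<Longrightarrow> p \<noteq> []" and ends: "fst ` X = last ` P"
    and Q: "Q = {p @ [t] | p t. p \<in> P \<and> (last p, t) \<in> X}"
  shows "(\<Union>q\<in>Q. set q) = (\<Union>p\<in>P. set p) \<union> snd ` X"
    "(\<Union>q\<in>Q. path_edges q) = (\<Union>p\<in>P. path_edges p) \<union> X"
proof -
  have snoc: "set (p @ [t]) = insert t (set p)" "path_edges (p @ [t]) = insert (last p, t) (path_edges p)"
    if "p \<in> P" for p t
    using path_edges_snoc[OF ne[OF that]] by auto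
  have ext: "set p \<subseteq> (\<Union>q\<in>Q. set q)" "path_edges p \<subseteq> (\<Union>q\<in>Q. path_edges q)"
    if p: "p \<in> P" for p
  proof -
    have "last p \<in> fst ` X" using p unfolding ends by (rule imageI)
    then obtain t where "(last p, t) \<in> X" by force
    then have "p @ [t] \<in> Q" using Q p by blast
    then show "set p \<subseteq> (\<Union>q\<in>Q. set q)" "path_edges p \<subseteq> (\<Union>q\<in>Q. path_edges q)"
      using snoc[OF p] by blast+
  qed
  have src: "snd e \<in> (\<Union>q\<in>Q. set q)" "e \<in> (\<Union>q\<in>Q. path_edges q)" if e: "e \<in> X" for e
  proof -
    have "fst e \<in> last ` P" using e unfolding ends[symmetric] by (rule imageI)
    then obtain p where p: "fst e = last p" "p \<in> P" by (rule imageE)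
    then have "(last p, snd e) \<in> X" using e by (metis prod.collapse)
    then have "p @ [snd e] \<in> Q" using Q p(2) by blast
    moreover have "snd e \<in> set (p @ [snd e])" "e \<in> path_edges (p @ [snd e])"
      using snoc(2)[OF p(2)] p(1) by (simp_all add: prod_eq_iff)
    ultimately show "snd e \<in> (\<Union>q\<in>Q. set q)" "e \<in> (\<Union>q\<in>Q. path_edges q)" by blast+
  qed
  note sub = UN_snoc_paths_subset[OF ne Q]
  have "(\<Union>p\<in>P. set p) \<subseteq> (\<Union>q\<in>Q. set q)" using ext(1) by (rule UN_least)
  moreover have "snd ` X \<subseteq> (\<Union>q\<in>Q. set q)" using src(1) by (rule image_subsetI)
  ultimately show "(\<Union>q\<in>Q. set q) = (\<Union>p\<in>P. set p) \<union> snd ` X"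
    using sub(1) by (metis Un_least subset_antisym)
  have "(\<Union>p\<in>P. path_edges p) \<subseteq> (\<Union>q\<in>Q. path_edges q)" using ext(2) by (rule UN_least)
  moreover have "X \<subseteq> (\<Union>q\<in>Q. path_edges q)" using src(2) by (rule subsetI)
  ultimately show "(\<Union>q\<in>Q. path_edges q) = (\<Union>p\<in>P. path_edges p) \<union> X"
    using sub(2) by (metis Un_least subset_antisym)
qed

lemma face_extend:
  assumes lev: "on_level (Suc m) T" and X: "X \<in> in_edge_covers T"
    and face: "(V, E) \<in> faces_of (fst ` X)"
  shows "(V \<union> T, E \<union> X) \<in> faces_of T"
proof -
  obtain P where P: "\<And>p. p \<in> P \<Longrightarrow> lattice_path p" "\<And>p. p \<in> P \<Longrightarrow> last p \<in> fst ` X"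
    "V = (\<Union>p\<in>P. set p)" "E = (\<Union>p\<in>P. path_edges p)" "fst ` X \<subseteq> V"
    using face by (elim faces_ofE) blast
  have X_in: "X \<subseteq> in_edges T" and "T \<subseteq> snd ` X" using X unfolding in_edge_covers_def by auto
  moreover have "snd ` X \<subseteq> T" using X_in unfolding in_edges_def by auto
  ultimately have T: "T = snd ` X" by blast
  have ne: "p \<noteq> []" if "p \<in> P" for p using P(1)[OF that] unfolding lattice_path_def by simp
  have "fst ` X \<subseteq> last ` P"
  proof
    fix u assume u: "u \<in> fst ` X"
    then obtain p where p: "p \<in> P" "u \<in> set p" using P(3,5) by blast
    have "level u = m" "level (last p) = m"
      using on_level_sources[OF lev X_in] u P(2)[OF p(1)] unfolding on_level_def by blast+
    then show "u \<in> last ` P" using lattice_path_level_le_last(2)[OF P(1)[OF p(1)] p(2)] p(1) by auto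
  qed
  then have ends: "fst ` X = last ` P" using P(2) by blast
  define Q where "Q = {p @ [t] | p t. p \<in> P \<and> (last p, t) \<in> X}"
  note UN_Q = UN_snoc_paths[OF ne ends Q_def]
  have "((\<Union>q\<in>Q. set q), (\<Union>q\<in>Q. path_edges q)) \<in> faces_of T"
  proof (rule faces_ofI)
    fix q assume "q \<in> Q"
    then obtain p t where "q = p @ [t]" "p \<in> P" "(last p, t) \<in> X" unfolding Q_def by blast
    then show "lattice_path q" "last q \<in> T"
      using X_in P(1) ne lattice_path_snoc unfolding in_edges_def by auto
  next
    show "T \<subseteq> (\<Union>q\<in>Q. set q)" using UN_Q(1) T by blast
  qed
  moreover have "(\<Union>q\<in>Q. set q) = V \<union> T" using UN_Q(1) P(3) T by simp
  moreover have "(\<Union>q\<in>Q. path_edges q) = E \<union> X" using UN_Q(2) P(4) by simp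
  ultimately show ?thesis by simp
qed

lemma face_extend_disjoint:
  assumes lev: "on_level (Suc m) T" and X: "X \<in> in_edge_covers T"
    and face: "(V, E) \<in> faces_of (fst ` X)"
  shows "V \<inter> T = {}" "E \<inter> in_edges T = {}"
proof -
  have X_in: "X \<subseteq> in_edges T" using X unfolding in_edge_covers_def by blast
  have "level v \<le> m" if "v \<in> V" for v
    using face_level_le[OF face on_level_sources[OF lev X_in] that] .
  then show VT: "V \<inter> T = {}" using lev unfolding on_level_def by fastforce
  show "E \<inter> in_edges T = {}"
    using face_edges(3)[OF face] VT unfolding in_edges_def by blast
qed

lemma h1_rank_face_extend:
  assumes lev: "on_level (Suc m) T" and X: "X \<in> in_edge_covers T"
    and face: "(V, E) \<in> faces_of (fst ` X)" and "T \<noteq> {}"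
  shows "h1_rank (V \<union> T, E \<union> X) = h1_rank (V, E) + (card X - card T)"
proof -
  have X_in: "X \<subseteq> in_edges T" and X_cov: "T \<subseteq> snd ` X"
    using X unfolding in_edge_covers_def by auto
  note lev' = on_level_sources[OF lev X_in]
  note face' = face_extend[OF lev X face]
  have "fst ` X \<noteq> {}" using X_cov \<open>T \<noteq> {}\<close> by blast
  note h1 = h1_rank_face[OF face lev' this] and h1' = h1_rank_face[OF face' lev \<open>T \<noteq> {}\<close>]
  have fin: "finite V" "finite E" "finite T" "finite X"
    using finite_face[OF face lev'] finite_face[OF face' lev] by auto
  have "card T \<le> card X" using X_cov fin(4) surj_card_le by blast
  moreover have "card (V \<union> T) = card V + card T" "card (E \<union> X) = card E + card X"
    using face_extend_disjoint[OF lev X face] X_in fin by (auto intro: card_Un_disjoint)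
  ultimately show ?thesis using h1 h1' by simp
qed

lemma fpoly_of_split:
  assumes lev: "on_level (Suc m) T" and "T \<noteq> {}"
  shows "fpoly_of T = (\<Sum>X\<in>in_edge_covers T. fpoly_of (fst ` X) * monom 1 (card X - card T))"
proof -
  let ?S = "SIGMA X:in_edge_covers T. faces_of (fst ` X)"
  let ?glue = "\<lambda>(X, V, E). (V \<union> T, E \<union> X)"
  let ?cut = "\<lambda>(V, E). (E \<inter> in_edges T, V - T, E - in_edges T)"
  have "fpoly_of T = (\<Sum>(X, \<gamma>)\<in>?S. monom 1 (h1_rank \<gamma> + (card X - card T)))"
    unfolding fpoly_of_def
  proof (rule sum.reindex_bij_witness[symmetric, of _ ?cut ?glue])
    fix z assume "z \<in> ?S"
    then obtain X V E where z: "z = (X, V, E)" and X: "X \<in> in_edge_covers T"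
      and face: "(V, E) \<in> faces_of (fst ` X)" by auto
    have X_in: "X \<subseteq> in_edges T" using X unfolding in_edge_covers_def by blast
    show "?cut (?glue z) = z"
      using face_extend_disjoint[OF lev X face] X_in z by auto
    show "?glue z \<in> faces_of T" using face_extend[OF lev X face] z by simp
    show "monom 1 (h1_rank (?glue z)) = (case z of (X, \<gamma>) \<Rightarrow> monom 1 (h1_rank \<gamma> + (card X - card T)))"
      using h1_rank_face_extend[OF lev X face \<open>T \<noteq> {}\<close>] z by simp
  next
    fix \<gamma> assume "\<gamma> \<in> faces_of T"
    then obtain V E where \<gamma>: "\<gamma> = (V, E)" and face: "(V, E) \<in> faces_of T" by (cases \<gamma>) auto
    have "T \<subseteq> V" using face by (elim faces_ofE)
    then show "?glue (?cut \<gamma>) = \<gamma>" using \<gamma> by auto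
    show "?cut \<gamma> \<in> ?S" using face_restrict[OF lev face] \<gamma> by simp
  qed
  also have "\<dots> = (\<Sum>X\<in>in_edge_covers T. \<Sum>\<gamma>\<in>faces_of (fst ` X). monom 1 (h1_rank \<gamma> + (card X - card T)))"
    using finite_in_edge_covers[OF lev] finite_faces_of on_level_sources[OF lev]
    unfolding in_edge_covers_def by (subst sum.Sigma) auto
  also have "\<dots> = (\<Sum>X\<in>in_edge_covers T. fpoly_of (fst ` X) * monom 1 (card X - card T))"
    unfolding fpoly_of_def sum_distrib_right by (simp add: mult_monom)
  finally show ?thesis .
qed

section \<open>Prefix sums and the words in \<open>W\<close>\<close>

definition psum :: "nat list \<Rightarrow> nat \<Rightarrow> nat" where
  "psum xs l = sum_list (take l xs)"

definition prefix_sums :: "nat list \<Rightarrow> nat set" where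
  "prefix_sums xs = psum xs ` {..length xs}"

lemma psum_0 [simp]: "psum xs 0 = 0"
  by (simp add: psum_def)

lemma psum_Suc: "l < length xs \<Longrightarrow> psum xs (Suc l) = psum xs l + xs ! l"
  unfolding psum_def by (simp add: take_Suc_conv_app_nth)

lemma prefix_sums_Nil [simp]: "prefix_sums [] = {0}"
  by (simp add: prefix_sums_def psum_def)

lemma prefix_sums_Cons: "prefix_sums (x # xs) = insert 0 ((+) x ` prefix_sums xs)"
  unfolding prefix_sums_def psum_def by (simp add: atMost_Suc_eq_insert_0 image_image)

lemma zero_in_prefix_sums: "0 \<in> prefix_sums xs"
  unfolding prefix_sums_def psum_def by force

lemma prefix_sums_filter_pos: "prefix_sums (filter (\<lambda>x. 0 < x) xs) = prefix_sums xs"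
  by (induction xs) (auto simp: prefix_sums_Cons insert_absorb zero_in_prefix_sums)

lemma terminals_eq_prefix_sums: "terminals ks = (\<lambda>x. (x, sum_list ks - x)) ` prefix_sums ks"
proof -
  have "sum_list (filter (\<lambda>x. 0 < x) ks) = sum_list ks"
    by (induction ks) auto
  moreover have "terminals_pos xs = (\<lambda>x. (x, sum_list xs - x)) ` prefix_sums xs" for xs
    unfolding terminals_pos_def prefix_sums_def psum_def by auto
  ultimately show ?thesis
    unfolding terminals_def by (simp add: prefix_sums_filter_pos)
qed

lemma sum_list_interleave:
  "length a = Suc (length b) \<Longrightarrow> sum_list (interleave a b) = sum_list a + sum_list b"
proof (induction b arbitrary: a)
  case (Cons y ys)
  then show ?case by (cases a) auto
qed (auto simp: length_Suc_conv)

lemma prefix_sums_interleave: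
  "length a = Suc (length b) \<Longrightarrow> prefix_sums (interleave a b) =
     (\<lambda>i. psum a i + psum b i) ` {..<length a} \<union> (\<lambda>i. psum a (Suc i) + psum b i) ` {..<length a}"
proof (induction b arbitrary: a)
  case Nil
  then obtain x where "a = [x]" by (auto simp: length_Suc_conv)
  then show ?case by (auto simp: prefix_sums_Cons psum_def)
next
  case (Cons y ys)
  then obtain x xs where a: "a = x # xs" "length xs = Suc (length ys)" by (cases a) auto
  have "prefix_sums (interleave a (y # ys)) = insert 0 (insert x ((+) (x + y) ` prefix_sums (interleave xs ys)))"
    unfolding a by (simp add: prefix_sums_Cons image_image add.assoc)
  then show ?case
    unfolding Cons.IH[OF a(2)] a(1)
    by (simp add: psum_def lessThan_Suc_eq_insert_0 image_Un image_image insert_commute add_ac)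
qed

lemma walpha_wbeta_cases:
  assumes "w \<in> Wset m"
  shows "(walpha w l, wbeta w l) \<in> {(1, 0), (0, 1), (1, 1)}"
proof (cases "1 \<le> l \<and> l \<le> length w")
  case True
  then have "w ! (l - 1) \<in> set w" by (intro nth_mem) auto
  then show ?thesis using assms True unfolding Wset_def walpha_def wbeta_def by auto
qed (auto simp: walpha_def wbeta_def)

lemma walpha_plus_wbeta:
  "w \<in> Wset m \<Longrightarrow> walpha w l + wbeta w l = 1 + walpha w l * wbeta w l"
  using walpha_wbeta_cases[of w m l] by auto

lemma walpha_wbeta_outside:
  "l = 0 \<or> length w < l \<Longrightarrow> walpha w l = 1 \<and> wbeta w l = 1"
  unfolding walpha_def wbeta_def by auto

lemma wsize_eq_sum: "wsize w = (\<Sum>l = 1..length w. walpha w l * wbeta w l)"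
proof -
  have "wsize w = (\<Sum>i<length w. fst (w ! i) * snd (w ! i))"
    unfolding wsize_def wtilde_def sum_list_sum_nth by (simp add: atLeast0LessThan split_beta)
  also have "\<dots> = (\<Sum>i<length w. walpha w (Suc i) * wbeta w (Suc i))"
    unfolding walpha_def wbeta_def by simp
  also have "\<dots> = (\<Sum>l = 1..length w. walpha w l * wbeta w l)"
    by (simp add: sum.atLeast1_atMost_eq)
  finally show ?thesis .
qed

lemma sum_walpha_wbeta:
  assumes w: "w \<in> Wset m"
  shows "(\<Sum>l = 1..Suc m. walpha w l) + (\<Sum>l<Suc m. wbeta w l) = Suc (Suc m) + wsize w"
proof -
  have lw: "length w = m" using w unfolding Wset_def by simp
  have "(\<Sum>l = 1..Suc m. walpha w l) = (\<Sum>i<m. walpha w (Suc i)) + 1"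
    using walpha_wbeta_outside[of "Suc m" w] lw by (simp add: sum.atLeast1_atMost_eq)
  moreover have "(\<Sum>l<Suc m. wbeta w l) = 1 + (\<Sum>i<m. wbeta w (Suc i))"
    using walpha_wbeta_outside[of 0 w] unfolding sum.lessThan_Suc_shift by simp
  moreover have "(\<Sum>i<m. walpha w (Suc i)) + (\<Sum>i<m. wbeta w (Suc i))
      = (\<Sum>i<m. 1 + walpha w (Suc i) * wbeta w (Suc i))"
    unfolding sum.distrib[symmetric] by (rule sum.cong[OF refl]) (rule walpha_plus_wbeta[OF w])
  moreover have "(\<Sum>i<m. 1 + walpha w (Suc i) * wbeta w (Suc i)) = m + wsize w"
    using lw unfolding sum.distrib by (simp add: wsize_eq_sum sum.atLeast1_atMost_eq)
  ultimately show ?thesis by linarith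
qed

lemma length_rw [simp]: "length (rw w ks) = length ks"
  by (simp add: rw_def del: upt_Suc)

lemma length_wtilde [simp]: "length (wtilde w) = length w"
  by (simp add: wtilde_def)

lemma nth_rw: "i < length ks \<Longrightarrow> rw w ks ! i = ks ! i + 1 - walpha w (Suc i) - wbeta w i"
  unfolding rw_def by (simp del: upt_Suc)

lemma nth_wtilde: "i < length w \<Longrightarrow> wtilde w ! i = walpha w (Suc i) * wbeta w (Suc i)"
  unfolding wtilde_def walpha_def wbeta_def by (simp add: split_beta)

section \<open>The terminal vertices of \<open>\<Gamma>\<^sub>k\<close> and their in-edges\<close>

definition terminal :: "nat list \<Rightarrow> nat \<Rightarrow> vert" where
  "terminal ks l = (psum ks l, sum_list ks - psum ks l)"

definition left_vertex :: "nat list \<Rightarrow> nat \<Rightarrow> vert" where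
  "left_vertex ks l = (psum ks l - 1, sum_list ks - psum ks l)"

definition lower_vertex :: "nat list \<Rightarrow> nat \<Rightarrow> vert" where
  "lower_vertex ks l = (psum ks l, sum_list ks - psum ks l - 1)"

(* alpha_l = 1 selects the edge into terminal l from the left, beta_l = 1 the one from below;
   the conventions alpha_s = beta_0 = 1 select the only in-edges of the last and first terminal. *)
definition word_edges :: "nat list \<Rightarrow> (nat \<times> nat) list \<Rightarrow> (vert \<times> vert) set" where
  "word_edges ks w =
     {(left_vertex ks l, terminal ks l) | l. 1 \<le> l \<and> l \<le> length ks \<and> walpha w l = 1}
   \<union> {(lower_vertex ks l, terminal ks l) | l. l < length ks \<and> wbeta w l = 1}"

definition edge_word :: "nat list \<Rightarrow> (vert \<times> vert) set \<Rightarrow> (nat \<times> nat) list" where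
  "edge_word ks X = map (\<lambda>l. (of_bool ((left_vertex ks l, terminal ks l) \<in> X),
      of_bool ((lower_vertex ks l, terminal ks l) \<in> X))) [1..<length ks]"

lemma length_edge_word: "length (edge_word ks X) = length ks - 1"
  by (simp add: edge_word_def)

lemma walpha_wbeta_edge_word:
  assumes "1 \<le> l" "l < length ks"
  shows "walpha (edge_word ks X) l = of_bool ((left_vertex ks l, terminal ks l) \<in> X)"
    "wbeta (edge_word ks X) l = of_bool ((lower_vertex ks l, terminal ks l) \<in> X)"
  using assms by (auto simp: edge_word_def walpha_def wbeta_def)

context
  fixes ks :: "nat list" and s :: nat
  assumes s_pos: "s \<ge> 1" and len: "length ks = s" and ks_pos: "\<forall>k\<in>set ks. k \<ge> 1"
begin

lemma psum_less: "l < l' \<Longrightarrow> l' \<le> s \<Longrightarrow> psum ks l < psum ks l'"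
proof (induction l' rule: less_induct)
  case (less l')
  then obtain j where j: "l' = Suc j" "l \<le> j" "j < s" by (cases l') auto
  have "psum ks l \<le> psum ks j" using less.IH[of j] j by (cases "l = j") auto
  moreover have "ks ! j \<ge> 1" using ks_pos len j(3) by simp
  ultimately show ?case using psum_Suc[of j ks] len j by simp
qed

lemma psum_length: "psum ks s = sum_list ks"
  unfolding psum_def using len by simp

lemma psum_inj: "l \<le> s \<Longrightarrow> l' \<le> s \<Longrightarrow> psum ks l = psum ks l' \<Longrightarrow> l = l'"
  using psum_less[of l l'] psum_less[of l' l] by (metis less_irrefl linorder_neqE_nat)

lemma psum_le_sum: "l \<le> s \<Longrightarrow> psum ks l \<le> sum_list ks"
  using psum_less[of l s] psum_length by (cases "l = s") auto

lemma psum_less_sum: "l < s \<Longrightarrow> psum ks l < sum_list ks"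
  using psum_less[of l s] psum_length by simp

lemma psum_pos: "1 \<le> l \<Longrightarrow> l \<le> s \<Longrightarrow> 0 < psum ks l"
  using psum_less[of 0 l] by (simp add: psum_def)

lemma sum_list_pos: "0 < sum_list ks"
  using psum_pos[of s] s_pos psum_length by simp

lemma terminal_inj: "l \<le> s \<Longrightarrow> l' \<le> s \<Longrightarrow> terminal ks l = terminal ks l' \<Longrightarrow> l = l'"
  unfolding terminal_def using psum_inj by simp

lemma left_ne_lower: "left_vertex ks l \<noteq> lower_vertex ks l"
  unfolding left_vertex_def lower_vertex_def using sum_list_pos by auto

lemma terminals_eq: "terminals ks = terminal ks ` {..s}"
  unfolding terminals_eq_prefix_sums prefix_sums_def terminal_def len by auto

lemma terminals_ne: "terminals ks \<noteq> {}"
  unfolding terminals_eq by blast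

lemma card_terminals: "card (terminals ks) = Suc s"
  unfolding terminals_eq using terminal_inj by (subst card_image) (auto simp: inj_on_def)

lemma on_level_terminals: "on_level (Suc (sum_list ks - 1)) (terminals ks)"
  unfolding on_level_def terminals_eq terminal_def level_def
  using psum_le_sum sum_list_pos by auto

lemma qedge_into_terminal:
  assumes "l \<le> s"
  shows "qedge u (terminal ks l) \<longleftrightarrow>
    (1 \<le> l \<and> u = left_vertex ks l) \<or> (l < s \<and> u = lower_vertex ks l)"
proof
  assume "qedge u (terminal ks l)"
  then consider "u = lower_vertex ks l" "sum_list ks - psum ks l \<noteq> 0"
    | "u = left_vertex ks l" "psum ks l \<noteq> 0"
    unfolding qedge_def terminal_def left_vertex_def lower_vertex_def by (cases u) auto
  then show "(1 \<le> l \<and> u = left_vertex ks l) \<or> (l < s \<and> u = lower_vertex ks l)"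
  proof cases
    case 1
    then have "l \<noteq> s" using psum_length by auto
    then show ?thesis using 1 assms by simp
  next
    case 2
    then have "l \<noteq> 0" by (metis psum_0)
    then show ?thesis using 2 by simp
  qed
next
  assume "(1 \<le> l \<and> u = left_vertex ks l) \<or> (l < s \<and> u = lower_vertex ks l)"
  then show "qedge u (terminal ks l)"
    using psum_pos[of l] psum_less_sum[of l] assms
    unfolding qedge_def terminal_def left_vertex_def lower_vertex_def by auto
qed

lemma in_edges_terminals:
  "in_edges (terminals ks) =
     {(left_vertex ks l, terminal ks l) | l. 1 \<le> l \<and> l \<le> s}
   \<union> {(lower_vertex ks l, terminal ks l) | l. l < s}"
proof (intro equalityI subsetI)
  fix e assume "e \<in> in_edges (terminals ks)"
  then obtain u l where e: "e = (u, terminal ks l)" "l \<le> s" "qedge u (terminal ks l)"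
    unfolding in_edges_def terminals_eq by auto
  then have "(1 \<le> l \<and> u = left_vertex ks l) \<or> (l < s \<and> u = lower_vertex ks l)"
    using qedge_into_terminal by simp
  then show "e \<in> {(left_vertex ks l, terminal ks l) | l. 1 \<le> l \<and> l \<le> s}
      \<union> {(lower_vertex ks l, terminal ks l) | l. l < s}"
    using e(1,2) by blast
next
  fix e assume "e \<in> {(left_vertex ks l, terminal ks l) | l. 1 \<le> l \<and> l \<le> s}
      \<union> {(lower_vertex ks l, terminal ks l) | l. l < s}"
  then consider l where "e = (left_vertex ks l, terminal ks l)" "1 \<le> l" "l \<le> s"
    | l where "e = (lower_vertex ks l, terminal ks l)" "l < s"
    by blast
  then show "e \<in> in_edges (terminals ks)"
    by cases (auto simp: in_edges_def terminals_eq qedge_into_terminal)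
qed

lemma in_edges_terminals_eqI:
  assumes "X \<subseteq> in_edges (terminals ks)" "Y \<subseteq> in_edges (terminals ks)"
    and "\<And>l. 1 \<le> l \<Longrightarrow> l \<le> s \<Longrightarrow>
      (left_vertex ks l, terminal ks l) \<in> X \<longleftrightarrow> (left_vertex ks l, terminal ks l) \<in> Y"
    and "\<And>l. l < s \<Longrightarrow>
      (lower_vertex ks l, terminal ks l) \<in> X \<longleftrightarrow> (lower_vertex ks l, terminal ks l) \<in> Y"
  shows "X = Y"
proof -
  have "e \<in> X \<longleftrightarrow> e \<in> Y" if "e \<in> in_edges (terminals ks)" for e
    using that assms(3,4) unfolding in_edges_terminals by blast
  then show ?thesis using assms(1,2) by blast
qed

lemma mem_word_edges_left:
  assumes "1 \<le> l" "l \<le> s"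
  shows "(left_vertex ks l, terminal ks l) \<in> word_edges ks w \<longleftrightarrow> walpha w l = 1"
proof
  assume "(left_vertex ks l, terminal ks l) \<in> word_edges ks w"
  then consider l' where "terminal ks l = terminal ks l'" "l' \<le> s" "walpha w l' = 1"
    | l' where "left_vertex ks l = lower_vertex ks l'" "terminal ks l = terminal ks l'" "l' < s"
    unfolding word_edges_def len by auto
  then show "walpha w l = 1"
  proof cases
    case 1
    then show ?thesis using terminal_inj[of l l'] assms by simp
  next
    case 2
    then show ?thesis using terminal_inj[of l l'] assms left_ne_lower[of l] by simp
  qed
qed (use assms in \<open>auto simp: word_edges_def len\<close>)

lemma mem_word_edges_lower:
  assumes "l < s"
  shows "(lower_vertex ks l, terminal ks l) \<in> word_edges ks w \<longleftrightarrow> wbeta w l = 1"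
proof
  assume "(lower_vertex ks l, terminal ks l) \<in> word_edges ks w"
  then consider l' where "lower_vertex ks l = left_vertex ks l'" "terminal ks l = terminal ks l'" "l' \<le> s"
    | l' where "terminal ks l = terminal ks l'" "l' < s" "wbeta w l' = 1"
    unfolding word_edges_def len by auto
  then show "wbeta w l = 1"
  proof cases
    case 1
    then show ?thesis using terminal_inj[of l l'] assms left_ne_lower[of l] by simp
  next
    case 2
    then show ?thesis using terminal_inj[of l l'] assms by simp
  qed
qed (use assms in \<open>auto simp: word_edges_def len\<close>)

lemma covers_in_edge:
  assumes "X \<in> in_edge_covers (terminals ks)" "l \<le> s"
  shows "(1 \<le> l \<and> (left_vertex ks l, terminal ks l) \<in> X)
    \<or> (l < s \<and> (lower_vertex ks l, terminal ks l) \<in> X)"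
proof -
  have "terminal ks l \<in> terminals ks" using assms(2) terminals_eq by auto
  then obtain u where u: "(u, terminal ks l) \<in> X" using assms(1) unfolding in_edge_covers_def by force
  moreover have "qedge u (terminal ks l)"
    using assms(1) u unfolding in_edge_covers_def in_edges_def by auto
  ultimately show ?thesis using qedge_into_terminal[OF assms(2)] by auto
qed

lemma word_edges_in_covers:
  assumes w: "w \<in> Wset (s - 1)"
  shows "word_edges ks w \<in> in_edge_covers (terminals ks)"
proof -
  have lw: "length w = s - 1" using w unfolding Wset_def by simp
  have "word_edges ks w \<subseteq> in_edges (terminals ks)"
    unfolding word_edges_def in_edges_terminals len by blast
  moreover have "terminal ks l \<in> snd ` word_edges ks w" if "l \<le> s" for l
  proof -
    have "1 \<le> l \<and> walpha w l = 1 \<or> l < s \<and> wbeta w l = 1"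
      using walpha_wbeta_cases[OF w, of l] walpha_wbeta_outside[of l w] lw that s_pos
      by (cases "l = 0"; cases "l = s") auto
    then show ?thesis
      using mem_word_edges_left[of l w] mem_word_edges_lower[of l w] that by force
  qed
  ultimately show ?thesis unfolding in_edge_covers_def terminals_eq by blast
qed

lemma walpha_edge_word:
  assumes "X \<in> in_edge_covers (terminals ks)" "1 \<le> l" "l \<le> s"
  shows "walpha (edge_word ks X) l = 1 \<longleftrightarrow> (left_vertex ks l, terminal ks l) \<in> X"
proof (cases "l = s")
  case True
  then show ?thesis
    using covers_in_edge[OF assms(1,3)] walpha_wbeta_outside[of l] length_edge_word len s_pos
    by simp
next
  case False
  then show ?thesis using assms(2,3) len walpha_wbeta_edge_word(1)[of l ks X] by simp
qed

lemma wbeta_edge_word: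
  assumes "X \<in> in_edge_covers (terminals ks)" "l < s"
  shows "wbeta (edge_word ks X) l = 1 \<longleftrightarrow> (lower_vertex ks l, terminal ks l) \<in> X"
proof (cases "l = 0")
  case True
  then show ?thesis
    using covers_in_edge[OF assms(1), of 0] walpha_wbeta_outside[of l] by simp
next
  case False
  then show ?thesis using assms(2) len walpha_wbeta_edge_word(2)[of l ks X] by simp
qed

lemma edge_word_in_Wset:
  assumes X: "X \<in> in_edge_covers (terminals ks)"
  shows "edge_word ks X \<in> Wset (s - 1)"
proof -
  have entries: "(of_bool ((left_vertex ks l, terminal ks l) \<in> X),
      of_bool ((lower_vertex ks l, terminal ks l) \<in> X)) \<in> {(1::nat, 0::nat), (0, 1), (1, 1)}"
    if "l \<in> {1..<s}" for l
    using covers_in_edge[OF X, of l] that by auto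
  have "set (edge_word ks X) \<subseteq> {(1, 0), (0, 1), (1, 1)}"
    unfolding edge_word_def len set_map set_upt by (rule image_subsetI) (rule entries)
  then show ?thesis unfolding Wset_def using length_edge_word len by simp
qed

lemma word_edges_edge_word:
  assumes X: "X \<in> in_edge_covers (terminals ks)"
  shows "word_edges ks (edge_word ks X) = X"
proof (rule in_edges_terminals_eqI)
  show "word_edges ks (edge_word ks X) \<subseteq> in_edges (terminals ks)"
    using word_edges_in_covers[OF edge_word_in_Wset[OF X]] unfolding in_edge_covers_def by blast
  show "X \<subseteq> in_edges (terminals ks)" using X unfolding in_edge_covers_def by blast
  fix l
  show "1 \<le> l \<Longrightarrow> l \<le> s \<Longrightarrow> (left_vertex ks l, terminal ks l) \<in> word_edges ks (edge_word ks X)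
      \<longleftrightarrow> (left_vertex ks l, terminal ks l) \<in> X"
    using mem_word_edges_left walpha_edge_word[OF X] by blast
  show "l < s \<Longrightarrow> (lower_vertex ks l, terminal ks l) \<in> word_edges ks (edge_word ks X)
      \<longleftrightarrow> (lower_vertex ks l, terminal ks l) \<in> X"
    using mem_word_edges_lower wbeta_edge_word[OF X] by blast
qed

lemma word_edges_eq_image:
  "word_edges ks w =
     (\<lambda>l. (left_vertex ks l, terminal ks l)) ` {l. 1 \<le> l \<and> l \<le> s \<and> walpha w l = 1}
   \<union> (\<lambda>l. (lower_vertex ks l, terminal ks l)) ` {l. l < s \<and> wbeta w l = 1}"
  unfolding word_edges_def len by blast

lemma edge_word_word_edges:
  assumes w: "w \<in> Wset (s - 1)"
  shows "edge_word ks (word_edges ks w) = w"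
proof (rule nth_equalityI)
  have lw: "length w = s - 1" using w unfolding Wset_def by simp
  then show "length (edge_word ks (word_edges ks w)) = length w"
    unfolding edge_word_def len by simp
  fix i assume "i < length (edge_word ks (word_edges ks w))"
  then have i: "i < s - 1" unfolding edge_word_def len by simp
  have "w ! i = (walpha w (Suc i), wbeta w (Suc i))"
    using i lw unfolding walpha_def wbeta_def by simp
  moreover have "(walpha w (Suc i), wbeta w (Suc i)) \<in> {(1, 0), (0, 1), (1, 1)}"
    by (rule walpha_wbeta_cases[OF w])
  ultimately show "edge_word ks (word_edges ks w) ! i = w ! i"
    using i mem_word_edges_left[of "Suc i" w] mem_word_edges_lower[of "Suc i" w]
    unfolding edge_word_def len by auto
qed

lemma bij_betw_word_edges:
  "bij_betw (word_edges ks) (Wset (s - 1)) (in_edge_covers (terminals ks))"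
proof (rule bij_betw_byWitness[where f' = "edge_word ks"])
  show "\<forall>w\<in>Wset (s - 1). edge_word ks (word_edges ks w) = w"
    using edge_word_word_edges by blast
  show "\<forall>X\<in>in_edge_covers (terminals ks). word_edges ks (edge_word ks X) = X"
    using word_edges_edge_word by blast
  show "word_edges ks ` Wset (s - 1) \<subseteq> in_edge_covers (terminals ks)"
    using word_edges_in_covers by blast
  show "edge_word ks ` in_edge_covers (terminals ks) \<subseteq> Wset (s - 1)"
    using edge_word_in_Wset by blast
qed

lemma card_word_edges:
  assumes w: "w \<in> Wset (s - 1)"
  shows "card (word_edges ks w) = Suc s + wsize w"
proof -
  define A where "A = {1..s} \<inter> {l. walpha w l = 1}"
  define B where "B = {..<s} \<inter> {l. wbeta w l = 1}"
  let ?left = "\<lambda>l. (left_vertex ks l, terminal ks l)"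
  let ?lower = "\<lambda>l. (lower_vertex ks l, terminal ks l)"
  have "word_edges ks w = ?left ` A \<union> ?lower ` B"
    unfolding word_edges_eq_image A_def B_def by auto
  moreover have "inj_on ?left A" "inj_on ?lower B"
    using terminal_inj unfolding A_def B_def inj_on_def by auto
  moreover have "?left l \<noteq> ?lower l'" if "l \<in> A" "l' \<in> B" for l l'
    using that terminal_inj[of l l'] left_ne_lower[of l] unfolding A_def B_def by auto
  then have "?left ` A \<inter> ?lower ` B = {}" by blast
  ultimately have card: "card (word_edges ks w) = card A + card B"
    by (simp add: card_Un_disjoint card_image A_def B_def)
  have bool: "walpha w l = of_bool (walpha w l = 1)" "wbeta w l = of_bool (wbeta w l = 1)"
    for l using walpha_wbeta_cases[OF w, of l] by auto
  have "(\<Sum>l = 1..s. walpha w l) = card A"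
    unfolding A_def by (subst sum.cong[OF refl bool(1)]) simp_all
  moreover have "(\<Sum>l<s. wbeta w l) = card B"
    unfolding B_def by (subst sum.cong[OF refl bool(2)]) simp_all
  ultimately show ?thesis
    using card sum_walpha_wbeta[OF w] s_pos by simp
qed

(* Positions 2i and 2i + 1 of the prefix sums of r_w(k) * w~ are the abscissae of the chosen
   in-neighbours of terminal i (the lower one if beta_i = 1) and of terminal i + 1 (the left
   one if alpha_(i+1) = 1). *)
lemma psum_reduced:
  assumes w: "w \<in> Wset (s - 1)" and "i < s"
  shows "psum (rw w ks) i + psum (wtilde w) i + 1 = psum ks i + wbeta w i"
    "psum (rw w ks) (Suc i) + psum (wtilde w) i + walpha w (Suc i) = psum ks (Suc i)"
proof -
  let ?r = "rw w ks" and ?t = "wtilde w"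
  have lw: "length w = s - 1" using w unfolding Wset_def by simp
  have odd: "psum ?r (Suc j) + psum ?t j + walpha w (Suc j) = psum ks (Suc j)"
    if j: "j < s" and even: "psum ?r j + psum ?t j + 1 = psum ks j + wbeta w j" for j
  proof -
    have "ks ! j \<ge> 1" using ks_pos len j by simp
    moreover have "walpha w (Suc j) \<le> 1" "wbeta w j \<le> 1"
      using walpha_wbeta_cases[OF w, of "Suc j"] walpha_wbeta_cases[OF w, of j] by auto
    ultimately have "?r ! j + walpha w (Suc j) + wbeta w j = ks ! j + 1"
      using nth_rw[of j ks w] len j by simp
    then show ?thesis
      using even psum_Suc[of j ?r] psum_Suc[of j ks] len j by simp
  qed
  have "psum ?r i + psum ?t i + 1 = psum ks i + wbeta w i" using \<open>i < s\<close>
  proof (induction i)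
    case 0
    then show ?case using walpha_wbeta_outside[of 0 w] by simp
  next
    case (Suc i)
    then have i: "i < length w" using lw by simp
    show ?case
      using walpha_plus_wbeta[OF w, of "Suc i"]
      using odd[of i] Suc psum_Suc[of i ?t] nth_wtilde[OF i] i by simp
  qed
  then show "psum ?r i + psum ?t i + 1 = psum ks i + wbeta w i"
    "psum ?r (Suc i) + psum ?t i + walpha w (Suc i) = psum ks (Suc i)"
    using odd \<open>i < s\<close> by auto
qed

lemma sum_list_reduced:
  assumes w: "w \<in> Wset (s - 1)"
  shows "sum_list (interleave (rw w ks) (wtilde w)) = sum_list ks - 1"
proof -
  have lw: "length w = s - 1" using w unfolding Wset_def by simp
  have "sum_list (interleave (rw w ks) (wtilde w)) = psum (rw w ks) s + psum (wtilde w) (s - 1)"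
    using lw len s_pos by (simp add: sum_list_interleave psum_def)
  also have "\<dots> = psum ks s - 1"
    using psum_reduced(2)[OF w, of "s - 1"] walpha_wbeta_outside[of s w] lw s_pos by simp
  finally show ?thesis using psum_length by simp
qed

lemma psum_reduced_even_cases:
  assumes w: "w \<in> Wset (s - 1)" and i: "i < s"
  shows "wbeta w i = 1 \<and> psum (rw w ks) i + psum (wtilde w) i = psum ks i
    \<or> 1 \<le> i \<and> walpha w i = 1 \<and> psum (rw w ks) i + psum (wtilde w) i = psum ks i - 1"
proof (cases "wbeta w i = 1")
  case True
  then show ?thesis using psum_reduced(1)[OF w i] by simp
next
  case False
  then have "wbeta w i = 0" "walpha w i = 1" using walpha_wbeta_cases[OF w, of i] by auto
  moreover have "i \<noteq> 0" using False walpha_wbeta_outside[of 0 w] by (cases i) auto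
  ultimately show ?thesis using psum_reduced(1)[OF w i] by simp
qed

lemma psum_reduced_odd_cases:
  assumes w: "w \<in> Wset (s - 1)" and i: "i < s"
  shows "walpha w (Suc i) = 1 \<and> psum (rw w ks) (Suc i) + psum (wtilde w) i = psum ks (Suc i) - 1
    \<or> Suc i < s \<and> wbeta w (Suc i) = 1 \<and> psum (rw w ks) (Suc i) + psum (wtilde w) i = psum ks (Suc i)"
proof (cases "walpha w (Suc i) = 1")
  case True
  then show ?thesis using psum_reduced(2)[OF w i] by simp
next
  case False
  then have "walpha w (Suc i) = 0" "wbeta w (Suc i) = 1"
    using walpha_wbeta_cases[OF w, of "Suc i"] by auto
  moreover have "Suc i \<noteq> s"
    using False walpha_wbeta_outside[of s w] w s_pos unfolding Wset_def by (cases "Suc i = s") auto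
  ultimately show ?thesis using psum_reduced(2)[OF w i] i by simp
qed

lemma prefix_sums_reduced:
  assumes w: "w \<in> Wset (s - 1)"
  shows "prefix_sums (interleave (rw w ks) (wtilde w)) =
    (\<lambda>l. psum ks l - 1) ` {l. 1 \<le> l \<and> l \<le> s \<and> walpha w l = 1}
    \<union> psum ks ` {l. l < s \<and> wbeta w l = 1}"
    (is "_ = ?L \<union> ?D")
proof -
  let ?r = "rw w ks" and ?t = "wtilde w"
  have "length ?r = Suc (length ?t)" using w len s_pos unfolding Wset_def by simp
  then have P: "prefix_sums (interleave ?r ?t) =
    (\<lambda>i. psum ?r i + psum ?t i) ` {..<s} \<union> (\<lambda>i. psum ?r (Suc i) + psum ?t i) ` {..<s}"
    using prefix_sums_interleave[of ?r ?t] len by simp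
  have L: "psum ks l - 1 \<in> ?L" if "1 \<le> l" "l \<le> s" "walpha w l = 1" for l
    using that by blast
  have D: "psum ks l \<in> ?D" if "l < s" "wbeta w l = 1" for l
    using that by blast
  have "psum ?r i + psum ?t i \<in> ?L \<union> ?D" "psum ?r (Suc i) + psum ?t i \<in> ?L \<union> ?D"
    if i: "i < s" for i
    using psum_reduced_even_cases[OF w i] psum_reduced_odd_cases[OF w i] L[of i] D[of i]
      L[of "Suc i"] D[of "Suc i"] i by auto
  moreover have "?L \<subseteq> (\<lambda>i. psum ?r (Suc i) + psum ?t i) ` {..<s}"
  proof
    fix x assume "x \<in> ?L"
    then obtain l where l: "x = psum ks l - 1" "1 \<le> l" "l \<le> s" "walpha w l = 1" by blast
    then obtain i where "l = Suc i" by (cases l) auto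
    then have "x = psum ?r (Suc i) + psum ?t i" "i < s" using psum_reduced(2)[OF w, of i] l by auto
    then show "x \<in> (\<lambda>i. psum ?r (Suc i) + psum ?t i) ` {..<s}" by blast
  qed
  moreover have "?D \<subseteq> (\<lambda>i. psum ?r i + psum ?t i) ` {..<s}"
  proof
    fix x assume "x \<in> ?D"
    then obtain i where i: "x = psum ks i" "i < s" "wbeta w i = 1" by blast
    then have "x = psum ?r i + psum ?t i" using psum_reduced(1)[OF w, of i] by simp
    then show "x \<in> (\<lambda>i. psum ?r i + psum ?t i) ` {..<s}" using i(2) by blast
  qed
  ultimately show ?thesis unfolding P by blast
qed

lemma fst_word_edges:
  assumes w: "w \<in> Wset (s - 1)"
  shows "fst ` word_edges ks w = terminals (interleave (rw w ks) (wtilde w))"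
proof -
  let ?pt = "\<lambda>x. (x, sum_list ks - 1 - x)"
  have "left_vertex ks l = ?pt (psum ks l - 1)" if "1 \<le> l" "l \<le> s" for l
    using psum_pos[OF that] psum_le_sum[OF that(2)] unfolding left_vertex_def by simp
  moreover have "lower_vertex ks l = ?pt (psum ks l)" for l
    unfolding lower_vertex_def by simp
  ultimately have "fst ` word_edges ks w =
      ?pt ` ((\<lambda>l. psum ks l - 1) ` {l. 1 \<le> l \<and> l \<le> s \<and> walpha w l = 1}
        \<union> psum ks ` {l. l < s \<and> wbeta w l = 1})"
    unfolding word_edges_eq_image image_Un image_image by (intro arg_cong2[where f = "(\<union>)"] image_cong) auto
  then show ?thesis
    unfolding terminals_eq_prefix_sums sum_list_reduced[OF w] prefix_sums_reduced[OF w] .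
qed

end

theorem lemma3p5:
  fixes ks :: "nat list" and s :: nat
  assumes "s \<ge> 1" and "length ks = s" and "\<forall>k\<in>set ks. k \<ge> 1"
  shows "fpoly ks =
    (\<Sum>w\<in>Wset (s - 1). fpoly (interleave (rw w ks) (wtilde w)) * monom 1 (wsize w))"
proof -
  let ?T = "terminals ks"
  have "fpoly ks = (\<Sum>X\<in>in_edge_covers ?T. fpoly_of (fst ` X) * monom 1 (card X - card ?T))"
    unfolding fpoly_eq_fpoly_of
    using fpoly_of_split[OF on_level_terminals[OF assms] terminals_ne[OF assms]] .
  also have "\<dots> = (\<Sum>w\<in>Wset (s - 1).
      fpoly_of (fst ` word_edges ks w) * monom 1 (card (word_edges ks w) - card ?T))"
    by (rule sum.reindex_bij_betw[OF bij_betw_word_edges[OF assms], symmetric])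
  also have "\<dots> = (\<Sum>w\<in>Wset (s - 1). fpoly (interleave (rw w ks) (wtilde w)) * monom 1 (wsize w))"
  proof (rule sum.cong[OF refl])
    fix w assume "w \<in> Wset (s - 1)"
    then show "fpoly_of (fst ` word_edges ks w) * monom 1 (card (word_edges ks w) - card ?T)
        = fpoly (interleave (rw w ks) (wtilde w)) * monom 1 (wsize w)"
      using fst_word_edges[OF assms] card_word_edges[OF assms] card_terminals[OF assms]
      by (simp add: fpoly_eq_fpoly_of)
  qed
  finally show ?thesis .
qed

end
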